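(* Let $\{a_n\}_{n=1}^\infty$ be a sequence of real numbers with $\limsup_{n\to\infty} a_n = \infty$. Then for infinitely many $k \in \mathbb{N}$, $$a_{k+1} > \left(1 + \frac{1}{k^2}\right)\max_{1 \le n \le k} a_n.$$ *)

theory Defs
  imports "HOL-Analysis.Analysis"
begin

end

theory Submission
  imports Defs
begin

text \<open>If the inequality failed for all large \<open>k\<close>, the running maximum \<open>M k\<close> of \<open>a\<close> would grow
  by a factor of at most \<open>1 + 1/k\<^sup>2\<close> per step. Since \<open>1 + 1/k\<^sup>2 \<le> exp (1/(k-1) - 1/k)\<close>, these
  factors telescope to a bounded product, so \<open>a\<close> would be bounded above, contradicting
  \<open>limsup a = \<infinity>\<close>.\<close>

lemma one_plus_inverse_square_le_exp_diff:
  assumes "2 \<le> k"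
  shows "1 + 1 / (real k)^2 \<le> exp (1 / (real k - 1) - 1 / real k)"
proof -
  have k: "real k \<ge> 2" using assms by simp
  have "1 / (real k)^2 \<le> 1 / (real k * (real k - 1))"
    using k by (intro divide_left_mono) (auto simp: power2_eq_square)
  also have "\<dots> = 1 / (real k - 1) - 1 / real k"
    using k by (simp add: field_simps)
  finally show ?thesis
    using exp_ge_add_one_self[of "1 / (real k - 1) - 1 / real k"] by linarith
qed

lemma bounded_of_growth_le_one_plus_inverse_square:
  fixes b :: "nat \<Rightarrow> real"
  assumes "2 \<le> K"
    and nonneg: "\<And>k. K \<le> k \<Longrightarrow> 0 \<le> b k"
    and growth: "\<And>k. K \<le> k \<Longrightarrow> b (Suc k) \<le> (1 + 1 / (real k)^2) * b k"
    and "K \<le> n"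
  shows "b n \<le> b K * exp (1 / (real K - 1))"
proof -
  have "b n * exp (1 / (real n - 1)) \<le> b K * exp (1 / (real K - 1))"
    using \<open>K \<le> n\<close>
  proof (induction n rule: dec_induct)
    case base
    show ?case by simp
  next
    case (step k)
    have "b (Suc k) * exp (1 / (real (Suc k) - 1)) \<le> (1 + 1 / (real k)^2) * b k * exp (1 / real k)"
      using growth[OF step.hyps(1)] by (simp add: mult_right_mono)
    also have "\<dots> = b k * ((1 + 1 / (real k)^2) * exp (1 / real k))"
      by simp
    also have "\<dots> \<le> b k * (exp (1 / (real k - 1) - 1 / real k) * exp (1 / real k))"
      using one_plus_inverse_square_le_exp_diff[of k] \<open>2 \<le> K\<close> step.hyps(1) nonneg[OF step.hyps(1)]
      by (intro mult_left_mono mult_right_mono) auto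
    also have "\<dots> = b k * exp (1 / (real k - 1))"
      by (simp flip: exp_add)
    also have "\<dots> \<le> b K * exp (1 / (real K - 1))"
      by (rule step.IH)
    finally show ?case .
  qed
  moreover have "b n \<le> b n * exp (1 / (real n - 1))"
    using nonneg[OF \<open>K \<le> n\<close>] \<open>2 \<le> K\<close> \<open>K \<le> n\<close>
    by (intro mult_le_cancel_left1[THEN iffD2] disjI1) auto
  ultimately show ?thesis by linarith
qed

lemma Max_image_atLeastAtMost_Suc:
  fixes f :: "nat \<Rightarrow> 'a::linorder"
  assumes "1 \<le> k"
  shows "Max (f ` {1..Suc k}) = max (f (Suc k)) (Max (f ` {1..k}))"
proof -
  have "{1..Suc k} = insert (Suc k) {1..k}" by auto
  then show ?thesis
    using assms by simp
qed

lemma max_zero_le_mult_max_zero: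
  fixes c x m :: real
  assumes "1 \<le> c" "x \<le> c * m"
  shows "max (max x m) 0 \<le> c * max m 0"
proof (cases "0 \<le> m")
  case True
  then have "m \<le> c * m" using mult_right_mono[OF assms(1) True] by simp
  then show ?thesis using True assms by (auto simp: max_def)
next
  case False
  then have "c * m \<le> m" using mult_right_mono_neg[OF assms(1), of m] by simp
  then have "x \<le> m" using assms(2) by linarith
  then show ?thesis using False by (simp add: max_def)
qed

lemma bdd_above_of_running_Max_growth:
  fixes a :: "nat \<Rightarrow> real"
  assumes "2 \<le> K"
    and growth: "\<And>k. K \<le> k \<Longrightarrow> a (Suc k) \<le> (1 + 1 / (real k)^2) * Max (a ` {1..k})"
  shows "bdd_above (range a)"
proof -
  define M where "M k = Max (a ` {1..k})" for k
  have M_growth: "max (M (Suc k)) 0 \<le> (1 + 1 / (real k)^2) * max (M k) 0" if "K \<le> k" for k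
  proof -
    have "M (Suc k) = max (a (Suc k)) (M k)"
      unfolding M_def using \<open>2 \<le> K\<close> that by (intro Max_image_atLeastAtMost_Suc) simp
    then show ?thesis
      using max_zero_le_mult_max_zero[OF _ growth[OF that]] by (simp add: M_def)
  qed
  define C where "C = max (M K) 0 * exp (1 / (real K - 1))"
  have "a n \<le> max C (a 0)" for n
  proof (cases "n = 0")
    case False
    then have "a n \<le> M (max n K)"
      unfolding M_def by (intro Max_ge) auto
    also have "\<dots> \<le> max (M (max n K)) 0"
      by (rule max.cobounded1)
    also have "\<dots> \<le> C"
      unfolding C_def
      by (rule bounded_of_growth_le_one_plus_inverse_square[OF \<open>2 \<le> K\<close> _ M_growth]) auto
    finally show ?thesis
      by (rule order_trans[OF _ max.cobounded1])
  qed simp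
  then show ?thesis
    by (intro bdd_aboveI2)
qed

lemma limsup_ereal_PInfty_not_bdd_above:
  fixes a :: "nat \<Rightarrow> real"
  assumes "limsup (\<lambda>n. ereal (a n)) = \<infinity>"
  shows "\<not> bdd_above (range a)"
proof
  assume "bdd_above (range a)"
  then obtain B where "\<And>n. a n \<le> B"
    by (auto simp: bdd_above_def)
  then have "limsup (\<lambda>n. ereal (a n)) \<le> ereal B"
    by (intro Limsup_bounded always_eventually) simp
  then show False using assms by simp
qed

theorem lemma2p7:
  fixes a :: "nat \<Rightarrow> real"
  assumes "limsup (\<lambda>n. ereal (a n)) = \<infinity>"
  shows "infinite {k::nat. k \<ge> 1 \<and> a (k + 1) > (1 + 1 / (real k)^2) * Max (a ` {1..k})}"
    (is "infinite ?S")
proof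
  assume "finite ?S"
  define K where "K = max (Suc (Max ?S)) 2"
  have "a (Suc k) \<le> (1 + 1 / (real k)^2) * Max (a ` {1..k})" if "K \<le> k" for k
  proof -
    have "k \<notin> ?S" "1 \<le> k"
      using Max_ge[OF \<open>finite ?S\<close>, of k] that by (auto simp: K_def)
    then show ?thesis by (simp add: not_less)
  qed
  then have "bdd_above (range a)"
    by (intro bdd_above_of_running_Max_growth[of K]) (simp_all add: K_def)
  with limsup_ereal_PInfty_not_bdd_above[OF assms] show False ..
qed

end
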